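(* Let $\dot G\in\mathcal C_1\cup\mathcal C_4\cup\mathcal C_5$ be a connected, non-complete, $5$-regular and $1$ net-regular SRSG with parameters $(n,5,a,b,c)$. If $(a,b)=(2,0)$, then $4\mid n$.
   Context: A signed graph $\dot G=(G,\sigma)$ is a simple graph $G$ with $\sigma:E(G)\to\{\pm1\}$; adjacency matrix $A_{\dot G}$ has entries $\sigma(v_iv_j)$ for adjacent vertices and $0$ otherwise. Degree and connectedness refer to $G$; net-degree is $d^+(v)-d^-(v)$; $\rho$ net-regular means all net-degrees equal $\rho$. $\dot G$ on $n$ vertices is an SRSG if it is neither homogeneous complete nor edgeless and there are $r\in\mathbb N$, $a,b,c\in\mathbb Z$ with $(A^2_{\dot G})_{ii}=r$, $(A^2_{\dot G})_{ij}=a$ for positive edges, $b$ for negative edges, $c$ for distinct non-adjacent pairs; parameters $(n,r,a,b,c)$. Classes: $\mathcal C_1$: $a=-b$ and (complete, or non-complete with $c\neq0$); $\mathcal C_4$: $a\ne-b$, non-complete, $c=0$; $\mathcal C_5$: $a\neq-b$, non-complete, $c\notin\{0,\frac{a+b}{2}\}$. *)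

theory Defs
  imports Main
begin

definition signed_graph :: "'a set \<Rightarrow> ('a \<Rightarrow> 'a \<Rightarrow> bool) \<Rightarrow> ('a \<Rightarrow> 'a \<Rightarrow> int) \<Rightarrow> bool" where
  "signed_graph V E \<sigma> \<longleftrightarrow> finite V
     \<and> (\<forall>u v. E u v \<longrightarrow> u \<in> V \<and> v \<in> V)
     \<and> (\<forall>u v. E u v \<longrightarrow> E v u)
     \<and> (\<forall>v. \<not> E v v)
     \<and> (\<forall>u v. E u v \<longrightarrow> \<sigma> u v = \<sigma> v u \<and> (\<sigma> u v = 1 \<or> \<sigma> u v = -1))"

definition sadj :: "('a \<Rightarrow> 'a \<Rightarrow> bool) \<Rightarrow> ('a \<Rightarrow> 'a \<Rightarrow> int) \<Rightarrow> 'a \<Rightarrow> 'a \<Rightarrow> int" where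
  "sadj E \<sigma> u v = (if E u v then \<sigma> u v else 0)"

definition sadj2 :: "'a set \<Rightarrow> ('a \<Rightarrow> 'a \<Rightarrow> bool) \<Rightarrow> ('a \<Rightarrow> 'a \<Rightarrow> int) \<Rightarrow> 'a \<Rightarrow> 'a \<Rightarrow> int" where
  "sadj2 V E \<sigma> u v = (\<Sum>w\<in>V. sadj E \<sigma> u w * sadj E \<sigma> w v)"

definition degree :: "'a set \<Rightarrow> ('a \<Rightarrow> 'a \<Rightarrow> bool) \<Rightarrow> 'a \<Rightarrow> nat" where
  "degree V E v = card {w\<in>V. E v w}"

definition net_degree :: "'a set \<Rightarrow> ('a \<Rightarrow> 'a \<Rightarrow> bool) \<Rightarrow> ('a \<Rightarrow> 'a \<Rightarrow> int) \<Rightarrow> 'a \<Rightarrow> int" where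
  "net_degree V E \<sigma> v = int (card {w\<in>V. E v w \<and> \<sigma> v w = 1}) - int (card {w\<in>V. E v w \<and> \<sigma> v w = -1})"

definition regular :: "'a set \<Rightarrow> ('a \<Rightarrow> 'a \<Rightarrow> bool) \<Rightarrow> nat \<Rightarrow> bool" where
  "regular V E k \<longleftrightarrow> (\<forall>v\<in>V. degree V E v = k)"

definition net_regular :: "'a set \<Rightarrow> ('a \<Rightarrow> 'a \<Rightarrow> bool) \<Rightarrow> ('a \<Rightarrow> 'a \<Rightarrow> int) \<Rightarrow> int \<Rightarrow> bool" where
  "net_regular V E \<sigma> \<rho> \<longleftrightarrow> (\<forall>v\<in>V. net_degree V E \<sigma> v = \<rho>)"

definition complete_graph :: "'a set \<Rightarrow> ('a \<Rightarrow> 'a \<Rightarrow> bool) \<Rightarrow> bool" where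
  "complete_graph V E \<longleftrightarrow> (\<forall>u\<in>V. \<forall>v\<in>V. u \<noteq> v \<longrightarrow> E u v)"

definition edgeless :: "('a \<Rightarrow> 'a \<Rightarrow> bool) \<Rightarrow> bool" where
  "edgeless E \<longleftrightarrow> (\<forall>u v. \<not> E u v)"

definition homogeneous :: "('a \<Rightarrow> 'a \<Rightarrow> bool) \<Rightarrow> ('a \<Rightarrow> 'a \<Rightarrow> int) \<Rightarrow> bool" where
  "homogeneous E \<sigma> \<longleftrightarrow> (\<forall>u v x y. E u v \<and> E x y \<longrightarrow> \<sigma> u v = \<sigma> x y)"

definition connected_graph :: "'a set \<Rightarrow> ('a \<Rightarrow> 'a \<Rightarrow> bool) \<Rightarrow> bool" where
  "connected_graph V E \<longleftrightarrow> V \<noteq> {} \<and> (\<forall>u\<in>V. \<forall>v\<in>V. E\<^sup>*\<^sup>* u v)"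

definition SRSG :: "'a set \<Rightarrow> ('a \<Rightarrow> 'a \<Rightarrow> bool) \<Rightarrow> ('a \<Rightarrow> 'a \<Rightarrow> int) \<Rightarrow>
    nat \<Rightarrow> nat \<Rightarrow> int \<Rightarrow> int \<Rightarrow> int \<Rightarrow> bool" where
  "SRSG V E \<sigma> n r a b c \<longleftrightarrow> signed_graph V E \<sigma> \<and> n = card V
     \<and> \<not> (complete_graph V E \<and> homogeneous E \<sigma>) \<and> \<not> edgeless E
     \<and> (\<forall>v\<in>V. sadj2 V E \<sigma> v v = int r)
     \<and> (\<forall>u v. E u v \<and> \<sigma> u v = 1 \<longrightarrow> sadj2 V E \<sigma> u v = a)
     \<and> (\<forall>u v. E u v \<and> \<sigma> u v = -1 \<longrightarrow> sadj2 V E \<sigma> u v = b)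
     \<and> (\<forall>u\<in>V. \<forall>v\<in>V. u \<noteq> v \<and> \<not> E u v \<longrightarrow> sadj2 V E \<sigma> u v = c)"

definition class_C1 :: "'a set \<Rightarrow> ('a \<Rightarrow> 'a \<Rightarrow> bool) \<Rightarrow> int \<Rightarrow> int \<Rightarrow> int \<Rightarrow> bool" where
  "class_C1 V E a b c \<longleftrightarrow> a = - b \<and> (complete_graph V E \<or> (\<not> complete_graph V E \<and> c \<noteq> 0))"

definition class_C4 :: "'a set \<Rightarrow> ('a \<Rightarrow> 'a \<Rightarrow> bool) \<Rightarrow> int \<Rightarrow> int \<Rightarrow> int \<Rightarrow> bool" where
  "class_C4 V E a b c \<longleftrightarrow> a \<noteq> - b \<and> \<not> complete_graph V E \<and> c = 0"

text \<open>c \<notin> {0, (a+b)/2}; the second condition is written as 2c \<noteq> a + b.\<close>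
definition class_C5 :: "'a set \<Rightarrow> ('a \<Rightarrow> 'a \<Rightarrow> bool) \<Rightarrow> int \<Rightarrow> int \<Rightarrow> int \<Rightarrow> bool" where
  "class_C5 V E a b c \<longleftrightarrow> a \<noteq> - b \<and> \<not> complete_graph V E \<and> c \<noteq> 0 \<and> 2 * c \<noteq> a + b"

end

theory Submission
  imports Defs
begin

text \<open>As the graph is net-regular with net-degree \<open>1\<close>, the all-ones vector is an eigenvector
  of \<open>A\<close> for the eigenvalue \<open>1\<close>, so every row of \<open>A\<^sup>2\<close> sums to \<open>1\<close>. The row of a vertex with
  three positive, two negative and \<open>n - 6\<close> non-neighbours sums to \<open>5 + 2 \<cdot> 3 + 0 \<cdot> 2 + c (n - 6)\<close>,
  hence \<open>c (n - 6) = -10\<close>. By the handshake lemma \<open>5n\<close>, and so \<open>n - 6\<close>, is even; an even divisor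
  of \<open>10\<close> is twice an odd divisor of \<open>5\<close>, so \<open>n - 6 \<equiv> 2 (mod 4)\<close>.\<close>

lemma even_card_if_fixpoint_free_involution:
  assumes "finite S" and "\<And>x. x \<in> S \<Longrightarrow> f x \<in> S \<and> f x \<noteq> x \<and> f (f x) = x"
  shows "even (card S)"
proof -
  let ?C = "(\<lambda>x. {x, f x}) ` S"
  have pairs_disjoint: "{x, f x} \<inter> {y, f y} = {}"
    if "x \<in> S" "y \<in> S" "{x, f x} \<noteq> {y, f y}" for x y
  proof -
    have "f (f x) = x" "f (f y) = y"
      using assms(2)[OF that(1)] assms(2)[OF that(2)] by blast+
    then show ?thesis
      using that(3) by (auto simp: doubleton_eq_iff)
  qed
  have "2 * card ?C = card (\<Union>?C)"
  proof (rule card_partition)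
    show "finite ?C" "finite (\<Union>?C)"
      using assms(1) by simp_all
    show "card c = 2" if "c \<in> ?C" for c
      using that assms(2) by force
    show "c1 \<inter> c2 = {}" if "c1 \<in> ?C" "c2 \<in> ?C" "c1 \<noteq> c2" for c1 c2
      using that pairs_disjoint by blast
  qed
  also have "\<Union>?C = S"
    using assms(2) by auto
  finally show ?thesis
    by (metis dvd_triv_left)
qed

lemma even_sum_degree:
  assumes "finite V" and "\<And>u v. E u v \<Longrightarrow> E v u" and "\<And>v. \<not> E v v"
  shows "even (\<Sum>v\<in>V. degree V E v)"
proof -
  let ?arcs = "Sigma V (\<lambda>u. {w\<in>V. E u w})"
  have "(\<Sum>v\<in>V. degree V E v) = card ?arcs"
    unfolding degree_def using assms(1) by simp
  moreover have "even (card ?arcs)"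
    by (rule even_card_if_fixpoint_free_involution[where f = "\<lambda>(u, w). (w, u)"])
      (use assms in auto)
  ultimately show ?thesis
    by simp
qed

lemma even_card_if_odd_regular:
  assumes "signed_graph V E \<sigma>" and "regular V E k" and "odd k"
  shows "even (card V)"
proof -
  have "(\<Sum>v\<in>V. degree V E v) = k * card V"
    using assms(2) by (simp add: regular_def)
  moreover have "even (\<Sum>v\<in>V. degree V E v)"
    using assms(1) by (intro even_sum_degree) (auto simp: signed_graph_def)
  ultimately show ?thesis
    using assms(3) by simp
qed

definition pos_neighbours :: "'a set \<Rightarrow> ('a \<Rightarrow> 'a \<Rightarrow> bool) \<Rightarrow> ('a \<Rightarrow> 'a \<Rightarrow> int) \<Rightarrow> 'a \<Rightarrow> 'a set" where
  "pos_neighbours V E \<sigma> v = {w\<in>V. E v w \<and> \<sigma> v w = 1}"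

definition neg_neighbours :: "'a set \<Rightarrow> ('a \<Rightarrow> 'a \<Rightarrow> bool) \<Rightarrow> ('a \<Rightarrow> 'a \<Rightarrow> int) \<Rightarrow> 'a \<Rightarrow> 'a set" where
  "neg_neighbours V E \<sigma> v = {w\<in>V. E v w \<and> \<sigma> v w = -1}"

definition non_neighbours :: "'a set \<Rightarrow> ('a \<Rightarrow> 'a \<Rightarrow> bool) \<Rightarrow> 'a \<Rightarrow> 'a set" where
  "non_neighbours V E v = {w\<in>V. w \<noteq> v \<and> \<not> E v w}"

lemma net_degree_eq:
  "net_degree V E \<sigma> v = int (card (pos_neighbours V E \<sigma> v)) - int (card (neg_neighbours V E \<sigma> v))"
  by (simp add: net_degree_def pos_neighbours_def neg_neighbours_def)

lemma neighbours_eq_pos_Un_neg: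
  assumes "signed_graph V E \<sigma>"
  shows "{w\<in>V. E v w} = pos_neighbours V E \<sigma> v \<union> neg_neighbours V E \<sigma> v"
  using assms by (auto simp: signed_graph_def pos_neighbours_def neg_neighbours_def)

lemma degree_eq_card_pos_plus_neg:
  assumes "signed_graph V E \<sigma>"
  shows "degree V E v = card (pos_neighbours V E \<sigma> v) + card (neg_neighbours V E \<sigma> v)"
proof -
  have "finite V"
    using assms by (simp add: signed_graph_def)
  then show ?thesis
    unfolding degree_def neighbours_eq_pos_Un_neg[OF assms]
    by (intro card_Un_disjoint) (auto simp: pos_neighbours_def neg_neighbours_def)
qed

lemma card_non_neighbours:
  assumes "signed_graph V E \<sigma>" and "v \<in> V"
  shows "int (card (non_neighbours V E v)) = int (card V) - 1 - int (degree V E v)"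
proof -
  have fin: "finite V" and irr: "\<not> E v v"
    using assms(1) by (auto simp: signed_graph_def)
  have "V = insert v ({w\<in>V. E v w} \<union> non_neighbours V E v)"
    using irr assms(2) by (auto simp: non_neighbours_def)
  also have "card \<dots> = 1 + degree V E v + card (non_neighbours V E v)"
    using fin irr by (simp add: degree_def non_neighbours_def, subst card_Un_disjoint) auto
  finally show ?thesis
    by simp
qed

lemma sum_sadj_eq_net_degree:
  assumes "signed_graph V E \<sigma>"
  shows "(\<Sum>w\<in>V. sadj E \<sigma> v w) = net_degree V E \<sigma> v"
proof -
  let ?P = "pos_neighbours V E \<sigma> v" and ?M = "neg_neighbours V E \<sigma> v"
  have fin: "finite V"
    using assms by (simp add: signed_graph_def)
  have "(\<Sum>w\<in>V. sadj E \<sigma> v w) = (\<Sum>w\<in>?P \<union> ?M. sadj E \<sigma> v w)"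
    using fin neighbours_eq_pos_Un_neg[OF assms, of v, symmetric]
    by (intro sum.mono_neutral_right) (auto simp: sadj_def)
  also have "\<dots> = (\<Sum>w\<in>?P. sadj E \<sigma> v w) + (\<Sum>w\<in>?M. sadj E \<sigma> v w)"
    using fin by (intro sum.union_disjoint) (auto simp: pos_neighbours_def neg_neighbours_def)
  also have "\<dots> = (\<Sum>w\<in>?P. 1) + (\<Sum>w\<in>?M. -1)"
    by (intro arg_cong2[where f = "(+)"] sum.cong)
      (auto simp: sadj_def pos_neighbours_def neg_neighbours_def)
  finally show ?thesis
    by (simp add: net_degree_eq)
qed

lemma sum_sadj2_eq_net_regular_square:
  assumes "signed_graph V E \<sigma>" and "net_regular V E \<sigma> \<rho>" and "v \<in> V"
  shows "(\<Sum>w\<in>V. sadj2 V E \<sigma> v w) = \<rho>\<^sup>2"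
proof -
  have row: "(\<Sum>w\<in>V. sadj E \<sigma> x w) = \<rho>" if "x \<in> V" for x
    using assms(2) that by (simp add: sum_sadj_eq_net_degree[OF assms(1)] net_regular_def)
  have "(\<Sum>w\<in>V. sadj2 V E \<sigma> v w) = (\<Sum>x\<in>V. sadj E \<sigma> v x * (\<Sum>w\<in>V. sadj E \<sigma> x w))"
    unfolding sadj2_def by (subst sum.swap) (simp add: sum_distrib_left)
  also have "\<dots> = (\<Sum>x\<in>V. sadj E \<sigma> v x) * \<rho>"
    by (simp add: row sum_distrib_right)
  finally show ?thesis
    using row[OF assms(3)] by (simp add: power2_eq_square)
qed

lemma SRSG_sum_sadj2:
  assumes "SRSG V E \<sigma> n r a b c" and "v \<in> V"
  shows "(\<Sum>w\<in>V. sadj2 V E \<sigma> v w)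
    = int r + a * int (card (pos_neighbours V E \<sigma> v)) + b * int (card (neg_neighbours V E \<sigma> v))
      + c * int (card (non_neighbours V E v))"
proof -
  let ?P = "pos_neighbours V E \<sigma> v" and ?M = "neg_neighbours V E \<sigma> v"
    and ?N = "non_neighbours V E v" and ?s = "sadj2 V E \<sigma> v"
  have sg: "signed_graph V E \<sigma>"
    using assms(1) by (simp add: SRSG_def)
  then have "finite V" and "\<not> E v v"
    by (auto simp: signed_graph_def)
  then have fin: "finite ?P" "finite ?M" "finite ?N"
    and disj: "v \<notin> ?P \<union> ?M \<union> ?N" "?P \<inter> ?M = {}" "(?P \<union> ?M) \<inter> ?N = {}"
    by (auto simp: pos_neighbours_def neg_neighbours_def non_neighbours_def)
  have "V = insert v (?P \<union> ?M \<union> ?N)"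
    using assms(2) neighbours_eq_pos_Un_neg[OF sg, of v] by (auto simp: non_neighbours_def)
  then have "sum ?s V = sum ?s (insert v (?P \<union> ?M \<union> ?N))"
    by (rule arg_cong)
  also have "\<dots> = ?s v + sum ?s (?P \<union> ?M \<union> ?N)"
    using fin disj(1) by (intro sum.insert) auto
  also have "sum ?s (?P \<union> ?M \<union> ?N) = (sum ?s ?P + sum ?s ?M) + sum ?s ?N"
    using fin disj(2,3) by (simp add: sum.union_disjoint)
  moreover have "?s v = int r"
    using assms by (simp add: SRSG_def)
  moreover have "sum ?s ?P = (\<Sum>w\<in>?P. a)"
    by (rule sum.cong) (use assms(1) in \<open>auto simp: SRSG_def pos_neighbours_def\<close>)
  moreover have "sum ?s ?M = (\<Sum>w\<in>?M. b)"
    by (rule sum.cong) (use assms(1) in \<open>auto simp: SRSG_def neg_neighbours_def\<close>)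
  moreover have "sum ?s ?N = (\<Sum>w\<in>?N. c)"
    by (rule sum.cong) (use assms in \<open>auto simp: SRSG_def non_neighbours_def\<close>)
  ultimately show ?thesis
    by (simp add: mult.commute)
qed

lemma four_dvd_if_even_and_sub_6_dvd_10:
  fixes n :: nat
  assumes "int n - 6 dvd 10" and "even n"
  shows "4 dvd n"
proof -
  have "even (int n - 6)"
    using assms(2) by simp
  then obtain e where e: "int n - 6 = 2 * e" ..
  have "e dvd 5"
    using assms(1) e dvd_times_left_cancel_iff[of 2 e 5] by simp
  then have "odd e"
    using dvd_trans[of 2 e 5] by auto
  then obtain m where "e = 2 * m + 1" ..
  with e show ?thesis
    by presburger
qed

theorem lemma3p6:
  fixes V :: "'a set" and E :: "'a \<Rightarrow> 'a \<Rightarrow> bool" and \<sigma> :: "'a \<Rightarrow> 'a \<Rightarrow> int"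
    and n :: nat and a b c :: int
  assumes "SRSG V E \<sigma> n 5 a b c"
    and "class_C1 V E a b c \<or> class_C4 V E a b c \<or> class_C5 V E a b c"
    and "connected_graph V E"
    and "\<not> complete_graph V E"
    and "regular V E 5"
    and "net_regular V E \<sigma> 1"
    and "(a, b) = (2, 0)"
  shows "4 dvd n"
proof -
  have sg: "signed_graph V E \<sigma>" and n: "n = card V"
    using assms(1) by (auto simp: SRSG_def)
  obtain v where v: "v \<in> V"
    using assms(3) by (auto simp: connected_graph_def)
  have deg: "degree V E v = 5"
    using assms(5) v by (simp add: regular_def)
  have "int (card (pos_neighbours V E \<sigma> v)) - int (card (neg_neighbours V E \<sigma> v)) = 1"
    using assms(6) v by (simp add: net_regular_def flip: net_degree_eq)
  then have pos: "card (pos_neighbours V E \<sigma> v) = 3"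
    using deg degree_eq_card_pos_plus_neg[OF sg, of v] by simp
  have "c * (int n - 6) = -10"
    using SRSG_sum_sadj2[OF assms(1) v] sum_sadj2_eq_net_regular_square[OF sg assms(6) v]
      card_non_neighbours[OF sg v] assms(7) pos deg n by simp
  then have "int n - 6 dvd 10"
    by (metis dvd_minus_iff dvd_triv_right)
  moreover have "even n"
    using even_card_if_odd_regular[OF sg assms(5)] n by simp
  ultimately show ?thesis
    by (rule four_dvd_if_even_and_sub_6_dvd_10)
qed

end
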